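(* Let $(E;\oplus,0)$ be a generalized effect algebra. If $E$ is monotone Dedekind upwards $\sigma$-complete, then $E$ is monotone Dedekind downwards $\sigma$-complete. If $E$ is upwards directed, then $E$ is monotone Dedekind upwards $\sigma$-complete if and only if $E$ is monotone Dedekind downwards $\sigma$-complete.
   Context: A generalized effect algebra is a structure $(E;\oplus,0)$ with $0\in E$ and a partial binary operation $\oplus$ such that for all $x,y,z\in E$: $x\oplus y=y\oplus x$ if one side is defined; $(x\oplus y)\oplus z=x\oplus(y\oplus z)$ if one side is defined; $x\oplus0=x$; $x\oplus y=x\oplus z$ implies $y=z$; $x\oplus y=0$ implies $x=y=0$. The induced partial order is $x\le y$ iff $x\oplus z=y$ for some $z\in E$. $E$ is monotone Dedekind upwards $\sigma$-complete if every sequence $x_1\le x_2\le\cdots$ that has an upper bound in $E$ has a supremum $\bigvee_n x_n$ in $E$; monotone Dedekind downwards $\sigma$-complete if every sequence $x_1\ge x_2\ge\cdots$ has an infimum $\bigwedge_n x_n$ in $E$; upwards directed if any two elements of $E$ have a common upper bound in $E$. *)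

theory Defs
  imports Main
begin

text \<open>A generalized effect algebra on the whole type 'a: the partial operation is
  modelled as a total function into 'a option (None = undefined), with zero element z.\<close>

definition gen_effect_algebra :: "('a \<Rightarrow> 'a \<Rightarrow> 'a option) \<Rightarrow> 'a \<Rightarrow> bool" where
  "gen_effect_algebra oplus z \<longleftrightarrow>
     (\<forall>x y. oplus x y = oplus y x) \<and>
     (\<forall>x y w. Option.bind (oplus x y) (\<lambda>u. oplus u w) = Option.bind (oplus y w) (\<lambda>v. oplus x v)) \<and>
     (\<forall>x. oplus x z = Some x) \<and>
     (\<forall>x y w. oplus x y \<noteq> None \<and> oplus x y = oplus x w \<longrightarrow> y = w) \<and>
     (\<forall>x y. oplus x y = Some z \<longrightarrow> x = z \<and> y = z)"

definition gea_le :: "('a \<Rightarrow> 'a \<Rightarrow> 'a option) \<Rightarrow> 'a \<Rightarrow> 'a \<Rightarrow> bool" where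
  "gea_le oplus x y \<longleftrightarrow> (\<exists>w. oplus x w = Some y)"

definition mono_dedekind_up_sigma_complete :: "('a \<Rightarrow> 'a \<Rightarrow> 'a option) \<Rightarrow> bool" where
  "mono_dedekind_up_sigma_complete oplus \<longleftrightarrow>
     (\<forall>f :: nat \<Rightarrow> 'a. (\<forall>n. gea_le oplus (f n) (f (Suc n))) \<and> (\<exists>u. \<forall>n. gea_le oplus (f n) u) \<longrightarrow>
        (\<exists>s. (\<forall>n. gea_le oplus (f n) s) \<and> (\<forall>u. (\<forall>n. gea_le oplus (f n) u) \<longrightarrow> gea_le oplus s u)))"

definition mono_dedekind_down_sigma_complete :: "('a \<Rightarrow> 'a \<Rightarrow> 'a option) \<Rightarrow> bool" where
  "mono_dedekind_down_sigma_complete oplus \<longleftrightarrow>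
     (\<forall>f :: nat \<Rightarrow> 'a. (\<forall>n. gea_le oplus (f (Suc n)) (f n)) \<longrightarrow>
        (\<exists>i. (\<forall>n. gea_le oplus i (f n)) \<and> (\<forall>l. (\<forall>n. gea_le oplus l (f n)) \<longrightarrow> gea_le oplus l i)))"

definition upwards_directed :: "('a \<Rightarrow> 'a \<Rightarrow> 'a option) \<Rightarrow> bool" where
  "upwards_directed oplus \<longleftrightarrow> (\<forall>x y. \<exists>u. gea_le oplus x u \<and> gea_le oplus y u)"

end

theory Submission
  imports Defs
begin

text \<open>Fix an upper bound \<open>w\<close>. Sending \<open>x \<preceq> w\<close> to its complement \<open>x'\<close> with \<open>x \<oplus> x' = w\<close>
  is, by cancellativity and associativity, an order anti-isomorphism of the interval
  \<open>[0, w]\<close>; it turns increasing sequences below \<open>w\<close> into decreasing ones and suprema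
  relative to \<open>[0, w]\<close> into infima. A decreasing sequence lies below its first term, so
  upwards completeness gives downwards completeness. Conversely, downwards completeness
  gives, for every upper bound \<open>w\<close> of an increasing sequence, a supremum relative to
  \<open>[0, w]\<close>; if the algebra is upwards directed, any two upper bounds have a common one
  above them, which makes the relative supremum a genuine one.\<close>

locale generalized_effect_algebra =
  fixes oplus :: "'a \<Rightarrow> 'a \<Rightarrow> 'a option" and z :: 'a
  assumes gea: "gen_effect_algebra oplus z"
begin

abbreviation le :: "'a \<Rightarrow> 'a \<Rightarrow> bool" (infix "\<preceq>" 50)
  where "x \<preceq> y \<equiv> gea_le oplus x y"

lemma commute: "oplus x y = oplus y x"
  using gea unfolding gen_effect_algebra_def by blast

lemma assoc_Some:
  assumes "oplus x y = Some u" "oplus u w = Some r"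
  obtains v where "oplus y w = Some v" "oplus x v = Some r"
proof -
  have "Option.bind (oplus y w) (oplus x) = Some r"
    using gea assms unfolding gen_effect_algebra_def by (metis bind.simps(2))
  then show ?thesis using that by (cases "oplus y w") auto
qed

lemma cancel_left: "oplus x y = Some c \<Longrightarrow> oplus x y' = Some c \<Longrightarrow> y = y'"
  using gea unfolding gen_effect_algebra_def by (metis option.distinct(1))

lemma le_refl: "x \<preceq> x"
  using gea unfolding gen_effect_algebra_def gea_le_def by blast

lemma le_trans: "x \<preceq> y \<Longrightarrow> y \<preceq> u \<Longrightarrow> x \<preceq> u"
  unfolding gea_le_def by (metis assoc_Some)

lemma summands_le:
  assumes "oplus x y = Some w"
  shows "x \<preceq> w" "y \<preceq> w"
  using assms commute unfolding gea_le_def by metis+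

lemma complement_antitone:
  assumes "oplus x x' = Some w" "oplus y y' = Some w" "x \<preceq> y"
  shows "y' \<preceq> x'"
proof -
  obtain d where d: "oplus x d = Some y" using assms(3) unfolding gea_le_def by blast
  obtain v where v: "oplus d y' = Some v" "oplus x v = Some w"
    using assoc_Some[OF d assms(2)] by blast
  have "x' = v" using cancel_left[OF assms(1) v(2)] .
  with v(1) show ?thesis using commute unfolding gea_le_def by metis
qed

lemma complement_le_iff:
  assumes "oplus x x' = Some w" "oplus y y' = Some w"
  shows "x \<preceq> y \<longleftrightarrow> y' \<preceq> x'"
  using complement_antitone assms commute by metis

lemma obtain_complements:
  assumes "\<And>n. f n \<preceq> w"
  obtains g where "\<And>n. oplus (f n) (g n) = Some w"
  using assms unfolding gea_le_def by metis

definition lub_within :: "'a \<Rightarrow> (nat \<Rightarrow> 'a) \<Rightarrow> 'a \<Rightarrow> bool" where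
  "lub_within w f s \<longleftrightarrow> (\<forall>n. f n \<preceq> s) \<and> (\<forall>u. u \<preceq> w \<longrightarrow> (\<forall>n. f n \<preceq> u) \<longrightarrow> s \<preceq> u)"

definition glb_within :: "'a \<Rightarrow> (nat \<Rightarrow> 'a) \<Rightarrow> 'a \<Rightarrow> bool" where
  "glb_within w f i \<longleftrightarrow> (\<forall>n. i \<preceq> f n) \<and> (\<forall>l. l \<preceq> w \<longrightarrow> (\<forall>n. l \<preceq> f n) \<longrightarrow> l \<preceq> i)"

lemma lub_within_iff_glb_within_complement:
  assumes fg: "\<And>n. oplus (f n) (g n) = Some w" and si: "oplus s i = Some w"
  shows "lub_within w g s \<longleftrightarrow> glb_within w f i"
proof -
  have gf: "oplus (g n) (f n) = Some w" for n using fg commute by metis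
  have upper: "(\<forall>n. g n \<preceq> s) \<longleftrightarrow> (\<forall>n. i \<preceq> f n)"
    using complement_le_iff[OF gf si] by blast
  have least: "(\<forall>u. u \<preceq> w \<longrightarrow> (\<forall>n. g n \<preceq> u) \<longrightarrow> s \<preceq> u) \<longleftrightarrow>
               (\<forall>l. l \<preceq> w \<longrightarrow> (\<forall>n. l \<preceq> f n) \<longrightarrow> l \<preceq> i)"
  proof -
    have swap: "((\<forall>n. g n \<preceq> u) \<longrightarrow> s \<preceq> u) \<longleftrightarrow> ((\<forall>n. u' \<preceq> f n) \<longrightarrow> u' \<preceq> i)"
      if "oplus u u' = Some w" for u u'
      using complement_le_iff[OF gf that] complement_le_iff[OF si that] by blast
    show ?thesis
    proof
      assume lub: "\<forall>u. u \<preceq> w \<longrightarrow> (\<forall>n. g n \<preceq> u) \<longrightarrow> s \<preceq> u"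
      show "\<forall>l. l \<preceq> w \<longrightarrow> (\<forall>n. l \<preceq> f n) \<longrightarrow> l \<preceq> i"
      proof (intro allI impI)
        fix l assume "l \<preceq> w" "\<forall>n. l \<preceq> f n"
        then obtain u where u: "oplus u l = Some w" using commute unfolding gea_le_def by metis
        show "l \<preceq> i" using swap[OF u] lub summands_le(1)[OF u] \<open>\<forall>n. l \<preceq> f n\<close> by blast
      qed
    next
      assume glb: "\<forall>l. l \<preceq> w \<longrightarrow> (\<forall>n. l \<preceq> f n) \<longrightarrow> l \<preceq> i"
      show "\<forall>u. u \<preceq> w \<longrightarrow> (\<forall>n. g n \<preceq> u) \<longrightarrow> s \<preceq> u"
      proof (intro allI impI)
        fix u assume "u \<preceq> w" "\<forall>n. g n \<preceq> u"
        then obtain u' where u: "oplus u u' = Some w" unfolding gea_le_def by blast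
        show "s \<preceq> u" using swap[OF u] glb summands_le(2)[OF u] \<open>\<forall>n. g n \<preceq> u\<close> by blast
      qed
    qed
  qed
  show ?thesis unfolding lub_within_def glb_within_def using upper least by blast
qed

lemma complements_of_increasing_decrease:
  assumes "\<And>n. oplus (f n) (g n) = Some w" "\<And>n. f n \<preceq> f (Suc n)"
  shows "g (Suc n) \<preceq> g n"
  using complement_antitone assms by blast

lemma complements_of_decreasing_increase:
  assumes "\<And>n. oplus (f n) (g n) = Some w" "\<And>n. f (Suc n) \<preceq> f n"
  shows "g n \<preceq> g (Suc n)"
  using complement_antitone assms by blast

lemma decreasing_le_first:
  assumes "\<And>n. f (Suc n) \<preceq> f n"
  shows "f n \<preceq> f 0"
  by (induction n) (use assms le_refl le_trans in blast)+

lemma down_complete_if_up_complete: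
  assumes up: "mono_dedekind_up_sigma_complete oplus"
  shows "mono_dedekind_down_sigma_complete oplus"
  unfolding mono_dedekind_down_sigma_complete_def
proof (intro allI impI)
  fix f :: "nat \<Rightarrow> 'a"
  assume "\<forall>n. f (Suc n) \<preceq> f n"
  then have dec: "\<And>n. f (Suc n) \<preceq> f n" by blast
  have below: "\<And>n. f n \<preceq> f 0" using decreasing_le_first[of f, OF dec] .
  obtain g where fg: "\<And>n. oplus (f n) (g n) = Some (f 0)"
    using obtain_complements[of f, OF below] by blast
  have g_below: "\<forall>n. g n \<preceq> f 0" using summands_le(2)[OF fg] by blast
  have "\<forall>n. g n \<preceq> g (Suc n)" using complements_of_decreasing_increase[of f, OF fg dec] by blast
  then obtain s where s_upper: "\<forall>n. g n \<preceq> s" and s_least: "\<forall>u. (\<forall>n. g n \<preceq> u) \<longrightarrow> s \<preceq> u"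
    using up g_below unfolding mono_dedekind_up_sigma_complete_def by blast
  then obtain i where si: "oplus s i = Some (f 0)"
    using g_below unfolding gea_le_def by blast
  have "lub_within (f 0) g s" unfolding lub_within_def using s_upper s_least by blast
  then have "glb_within (f 0) f i"
    using lub_within_iff_glb_within_complement[of f g, OF fg si] by blast
  then show "\<exists>i. (\<forall>n. i \<preceq> f n) \<and> (\<forall>l. (\<forall>n. l \<preceq> f n) \<longrightarrow> l \<preceq> i)"
    unfolding glb_within_def by blast
qed

lemma lub_within_if_down_complete:
  assumes down: "mono_dedekind_down_sigma_complete oplus"
    and inc: "\<And>n. f n \<preceq> f (Suc n)" and below: "\<And>n. f n \<preceq> w"
  obtains s where "lub_within w f s"
proof -
  obtain g where fg: "\<And>n. oplus (f n) (g n) = Some w"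
    using obtain_complements[of f, OF below] by blast
  have gf: "oplus (g n) (f n) = Some w" for n using fg commute by metis
  have "\<forall>n. g (Suc n) \<preceq> g n"
    using complements_of_increasing_decrease[of f, OF fg inc] by blast
  then obtain i where i_lower: "\<forall>n. i \<preceq> g n" and i_greatest: "\<forall>l. (\<forall>n. l \<preceq> g n) \<longrightarrow> l \<preceq> i"
    using down unfolding mono_dedekind_down_sigma_complete_def by blast
  have "i \<preceq> w" using i_lower summands_le(1)[OF gf] le_trans by blast
  then obtain s where si: "oplus s i = Some w" using commute unfolding gea_le_def by metis
  have "glb_within w g i" unfolding glb_within_def using i_lower i_greatest by blast
  then show ?thesis using that lub_within_iff_glb_within_complement[of g f, OF gf si] by blast
qed

lemma up_complete_if_down_complete_directed:
  assumes down: "mono_dedekind_down_sigma_complete oplus" and dir: "upwards_directed oplus"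
  shows "mono_dedekind_up_sigma_complete oplus"
  unfolding mono_dedekind_up_sigma_complete_def
proof (intro allI impI)
  fix f :: "nat \<Rightarrow> 'a"
  assume "(\<forall>n. f n \<preceq> f (Suc n)) \<and> (\<exists>u. \<forall>n. f n \<preceq> u)"
  then obtain u where inc: "\<And>n. f n \<preceq> f (Suc n)" and below_u: "\<And>n. f n \<preceq> u" by blast
  obtain s where s: "lub_within u f s"
    using lub_within_if_down_complete[of f u, OF down inc below_u] by blast
  have "s \<preceq> v" if v: "\<forall>n. f n \<preceq> v" for v
  proof -
    obtain w where "u \<preceq> w" "v \<preceq> w" using dir unfolding upwards_directed_def by blast
    then have below_w: "f n \<preceq> w" for n using below_u le_trans by blast
    obtain s' where s': "lub_within w f s'"
      using lub_within_if_down_complete[of f w, OF down inc below_w] by blast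
    then have "s' \<preceq> u" "s' \<preceq> v"
      using below_u v \<open>u \<preceq> w\<close> \<open>v \<preceq> w\<close> unfolding lub_within_def by blast+
    moreover have "s \<preceq> s'"
      using s s' \<open>s' \<preceq> u\<close> unfolding lub_within_def by blast
    ultimately show ?thesis using le_trans by blast
  qed
  then show "\<exists>s. (\<forall>n. f n \<preceq> s) \<and> (\<forall>v. (\<forall>n. f n \<preceq> v) \<longrightarrow> s \<preceq> v)"
    using s unfolding lub_within_def by blast
qed

end

theorem lemma5p1:
  fixes oplus :: "'a \<Rightarrow> 'a \<Rightarrow> 'a option" and z :: 'a
  assumes "gen_effect_algebra oplus z"
  shows "(mono_dedekind_up_sigma_complete oplus \<longrightarrow> mono_dedekind_down_sigma_complete oplus) \<and>
         (upwards_directed oplus \<longrightarrow>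
            (mono_dedekind_up_sigma_complete oplus \<longleftrightarrow> mono_dedekind_down_sigma_complete oplus))"
proof -
  interpret generalized_effect_algebra oplus z by unfold_locales (rule assms)
  show ?thesis
    using down_complete_if_up_complete up_complete_if_down_complete_directed by blast
qed

end
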